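(* Let $\{B^i\}_{i=1}^N$ be complex $n\times n$ matrices and $L\in\mathbb N$. If both $\{B^{i_1}\cdots B^{i_L}:\sum_{k}|i_k|\equiv0\pmod 2\}$ and $\{B^{i_1}\cdots B^{i_L}:\sum_k|i_k|\equiv1\pmod2\}$ span $\mathrm M_n(\mathbb C)$ as vector spaces, then both $\{B^{i_1}\cdots B^{i_{L+1}}:\sum_{k}|i_k|\equiv0\}$ and $\{B^{i_1}\cdots B^{i_{L+1}}:\sum_k|i_k|\equiv1\}$ span $\mathrm M_n(\mathbb C)$.
   Context: $i\mapsto|i|\in\{0,1\}$ is a fixed parity function on $\{1,\dots,N\}$. *)

theory Defs
  imports "HOL-Analysis.Analysis"
begin

definition cmat_scale :: "complex \<Rightarrow> complex^'n^'n \<Rightarrow> complex^'n^'n" where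
  "cmat_scale c A = (\<chi> i j. c * A $ i $ j)"

definition cspan :: "(complex^'n^'n) set \<Rightarrow> (complex^'n^'n) set" where
  "cspan S = module.span cmat_scale S"

definition word_prod :: "(nat \<Rightarrow> complex^'n^'n) \<Rightarrow> nat list \<Rightarrow> complex^'n^'n" where
  "word_prod B ws = foldr (\<lambda>i M. B i ** M) ws (mat 1)"

definition parity_products ::
  "(nat \<Rightarrow> complex^'n^'n) \<Rightarrow> nat \<Rightarrow> (nat \<Rightarrow> nat) \<Rightarrow> nat \<Rightarrow> nat \<Rightarrow> (complex^'n^'n) set" where
  "parity_products B N par L r =
     {word_prod B ws | ws. length ws = L \<and> set ws \<subseteq> {1..N} \<and> (\<Sum>i\<leftarrow>ws. par i) mod 2 = r}"

end

theory Submission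
  imports Defs
begin

text \<open>Prepending a letter \<open>i\<close> to a word of length \<open>L\<close> and parity \<open>s\<close> gives a word of length
  \<open>L + 1\<close> and parity \<open>s + |i|\<close>. Since the products of length \<open>L\<close> of either parity span
  everything, \<open>B\<^sup>i X\<close> lies in the span of the products of length \<open>L + 1\<close> and parity \<open>r\<close> for
  every matrix \<open>X\<close> and letter \<open>i\<close>. Writing the identity as a combination of odd products
  \<open>B\<^sup>i W\<close> of length \<open>L\<close> then gives \<open>A = \<Sum> c\<^sub>W B\<^sup>i (W A)\<close> in that span.\<close>

lemma module_cmat_scale: "module (cmat_scale :: complex \<Rightarrow> complex^'n^'n \<Rightarrow> _)"
  by unfold_locales (auto simp: cmat_scale_def vec_eq_iff algebra_simps)

lemma module_hom_matrix_mult_left: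
  "module_hom cmat_scale cmat_scale (\<lambda>X::complex^'n^'n. M ** X)"
  by (simp add: module_hom_iff module_cmat_scale matrix_add_ldistrib)
     (simp add: cmat_scale_def vec_eq_iff matrix_matrix_mult_def sum_distrib_left algebra_simps)

lemma module_hom_matrix_mult_right:
  "module_hom cmat_scale cmat_scale (\<lambda>X::complex^'n^'n. X ** M)"
  by (simp add: module_hom_iff module_cmat_scale cmat_scale_def vec_eq_iff
      matrix_matrix_mult_def sum_distrib_left sum.distrib algebra_simps)

lemma cspan_image_module_hom:
  assumes "module_hom cmat_scale cmat_scale f"
  shows "cspan (f ` S) = f ` cspan S"
  unfolding cspan_def by (rule module_hom.span_image[OF assms])

lemma cspan_mono: "S \<subseteq> T \<Longrightarrow> cspan S \<subseteq> cspan T"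
  unfolding cspan_def by (rule module.span_mono[OF module_cmat_scale])

lemma cspan_subset_cspan: "S \<subseteq> cspan T \<Longrightarrow> cspan S \<subseteq> cspan T"
  unfolding cspan_def
  by (metis module.span_minimal module.subspace_span module_cmat_scale)

lemma parity_products_Suc_cases:
  assumes "W \<in> parity_products B N par (Suc L) r"
  obtains i W' where "i \<in> {1..N}" "W = B i ** W'"
    "W' \<in> parity_products B N par L ((r + par i) mod 2)"
proof -
  obtain ws where ws: "W = word_prod B ws" "length ws = Suc L" "set ws \<subseteq> {1..N}"
    "(\<Sum>j\<leftarrow>ws. par j) mod 2 = r"
    using assms by (auto simp: parity_products_def)
  then obtain i vs where ws_Cons: "ws = i # vs" by (cases ws) auto
  have "(r + par i) mod 2 = ((\<Sum>j\<leftarrow>vs. par j) + 2 * par i) mod 2"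
    unfolding ws(4)[symmetric] ws_Cons by (simp add: mod_add_left_eq mod_add_right_eq add_ac mult_2)
  then have "(\<Sum>j\<leftarrow>vs. par j) mod 2 = (r + par i) mod 2"
    by simp
  with ws ws_Cons have "i \<in> {1..N}" "W = B i ** word_prod B vs"
    and "word_prod B vs \<in> parity_products B N par L ((r + par i) mod 2)"
    by (auto simp: word_prod_def parity_products_def)
  then show thesis by (rule that)
qed

lemma matrix_mult_parity_products_subset:
  assumes "i \<in> {1..N}"
  shows "(\<lambda>W. B i ** W) ` parity_products B N par L s
    \<subseteq> parity_products B N par (Suc L) ((par i + s) mod 2)"
proof
  fix Z assume "Z \<in> (\<lambda>W. B i ** W) ` parity_products B N par L s"
  then obtain vs where "Z = B i ** word_prod B vs" "length vs = L" "set vs \<subseteq> {1..N}"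
    "(\<Sum>j\<leftarrow>vs. par j) mod 2 = s"
    by (auto simp: parity_products_def)
  with assms show "Z \<in> parity_products B N par (Suc L) ((par i + s) mod 2)"
    unfolding parity_products_def
    by (intro CollectI exI[of _ "i # vs"]) (auto simp: word_prod_def mod_add_right_eq)
qed

lemma matrix_mult_in_cspan_parity_products_Suc:
  assumes "i \<in> {1..N}" and "cspan (parity_products B N par L s) = UNIV"
  shows "B i ** X \<in> cspan (parity_products B N par (Suc L) ((par i + s) mod 2))"
proof -
  have "B i ** X \<in> (\<lambda>W. B i ** W) ` cspan (parity_products B N par L s)"
    using assms(2) by simp
  also have "\<dots> = cspan ((\<lambda>W. B i ** W) ` parity_products B N par L s)"
    by (rule cspan_image_module_hom[OF module_hom_matrix_mult_left, symmetric])
  also have "\<dots> \<subseteq> cspan (parity_products B N par (Suc L) ((par i + s) mod 2))"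
    by (rule cspan_mono[OF matrix_mult_parity_products_subset[OF assms(1)]])
  finally show ?thesis .
qed

lemma cspan_parity_products_Suc:
  assumes spans: "\<And>s. s < 2 \<Longrightarrow> cspan (parity_products B N par L s) = UNIV"
    and "r < 2"
  shows "cspan (parity_products B N par (Suc L) r) = UNIV"
proof -
  let ?S = "cspan (parity_products B N par (Suc L) r)"
  have "A \<in> ?S" for A
  proof -
    have "W ** A \<in> ?S" if W: "W \<in> parity_products B N par L 1" for W
    proof -
      \<comment> \<open>there are no odd words of length 0\<close>
      obtain K where "L = Suc K"
        using W by (cases L) (auto simp: parity_products_def)
      with W obtain i W' where i: "i \<in> {1..N}" and W_eq: "W = B i ** W'"
        by (auto elim: parity_products_Suc_cases)
      have "(par i + (r + par i) mod 2) mod 2 = r"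
        using \<open>r < 2\<close> by (simp add: mod_add_right_eq add.left_commute[of "par i" r] flip: mult_2)
      moreover have "B i ** (W' ** A)
          \<in> cspan (parity_products B N par (Suc L) ((par i + (r + par i) mod 2) mod 2))"
        by (rule matrix_mult_in_cspan_parity_products_Suc[OF i spans]) simp
      ultimately show ?thesis
        by (simp add: W_eq matrix_mul_assoc)
    qed
    then have "cspan ((\<lambda>W. W ** A) ` parity_products B N par L 1) \<subseteq> ?S"
      by (intro cspan_subset_cspan) blast
    moreover have "mat 1 ** A \<in> cspan ((\<lambda>W. W ** A) ` parity_products B N par L 1)"
      unfolding cspan_image_module_hom[OF module_hom_matrix_mult_right]
      by (rule imageI) (simp add: spans)
    ultimately show ?thesis by auto
  qed
  then show ?thesis by auto
qed

theorem mainTheorem5: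
  fixes B :: "nat \<Rightarrow> complex^'n^'n" and N L :: nat and par :: "nat \<Rightarrow> nat"
  assumes par01: "\<forall>i\<in>{1..N}. par i \<in> {0, 1}"
    and even_span: "cspan (parity_products B N par L 0) = UNIV"
    and odd_span: "cspan (parity_products B N par L 1) = UNIV"
  shows "cspan (parity_products B N par (L + 1) 0) = UNIV
       \<and> cspan (parity_products B N par (L + 1) 1) = UNIV"
proof -
  have spans: "cspan (parity_products B N par L s) = UNIV" if "s < 2" for s
    using that even_span odd_span by (cases s) auto
  show ?thesis
    using cspan_parity_products_Suc[OF spans] by simp
qed

end
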